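(* Let $N,K,F\in\mathbb{Z}^+$ and let $\boldsymbol{\alpha}=[\alpha_1,\ldots,\alpha_F]$ be positive rationals with $\sum_{f=1}^F\alpha_f=1$ and $\alpha_f L\in\mathbb{Z}^+$ for all $f$. Split each of the $K$ independent $L$-bit messages $W_1,\ldots,W_K$ into $F$ disjoint sub-messages $W_k=(W_{k,1},\ldots,W_{k,F})$ with $|W_{k,f}|=\alpha_f L$ bits, and store the sub-message set $\mathcal{M}_f=\bigcup_{k\in[K]}W_{k,f}$ (uncoded) at every database of a non-empty set $\mathcal{N}_f\subseteq[N]$, $f\in[F]$. Suppose that for each $f\in[F]$ a full-storage PIR scheme with achievable rate $R_f$ is used by the user to privately download $W_{\theta,f}$ from the databases in $\mathcal{N}_f$, where $W_\theta$, $\theta\in[K]$, is the desired message. Then the resulting scheme privately retrieves $W_\theta$ from the $N$ storage-constrained databases with rate $$R=\left(\frac{\alpha_1}{R_1}+\frac{\alpha_2}{R_2}+\cdots+\frac{\alpha_F}{R_F}\right)^{-1}.$$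
   Context: Private information retrieval (PIR) setting: $K$ independent messages $W_1,\ldots,W_K$, each uniformly of $L$ bits, are stored uncoded among $N$ non-colluding databases (DBs). A user wanting $W_\theta$ sends queries (independent of the messages) to the DBs; each DB answers as a deterministic function of its stored content and its query; the user must recover $W_\theta$ with zero error from all answers; privacy means that for every DB $n$, the index $\theta$ is independent of that DB's query, answer, all messages and all storage contents. The rate of a scheme is $R=L/D$ where $D$ is the total number of downloaded bits. A full-storage PIR (FS-PIR) scheme is a PIR scheme for a set of databases each of which stores all the messages in question (here: every DB in $\mathcal{N}_f$ stores all of $W_{1,f},\ldots,W_{K,f}$); its rate $R_f$ is the ratio of the size of the desired sub-message to the number of downloaded bits. *)

theory Defs
  imports "HOL-Probability.Probability"
begin

(* Indexing conventions (0-based): messages k < K, databases n < N, sub-messages f < F. *)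

definition msgs :: "nat \<Rightarrow> nat \<Rightarrow> bool list list set" where
  "msgs K L = {Ws. length Ws = K \<and> (\<forall>w\<in>set Ws. length w = L)}"

definition msg_pmf :: "nat \<Rightarrow> nat \<Rightarrow> bool list list pmf" where
  "msg_pmf K L = pmf_of_set (msgs K L)"

(* A PIR scheme: the user draws a private key (randomness, may depend on theta) independent of the
   messages; the query sent to DB n is a function of the key; DB n answers deterministically from
   its stored content and its query; the user decodes from theta, its key and all answers. *)
record ('k, 'q, 's, 'a) pir =
  key :: "nat \<Rightarrow> 'k pmf"
  qry :: "nat \<Rightarrow> 'k \<Rightarrow> 'q"
  ans :: "nat \<Rightarrow> 's \<Rightarrow> 'q \<Rightarrow> 'a"
  dec :: "nat \<Rightarrow> 'k \<Rightarrow> (nat \<Rightarrow> 'a option) \<Rightarrow> bool list"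

definition answers ::
  "nat set \<Rightarrow> (nat \<Rightarrow> bool list list \<Rightarrow> 's) \<Rightarrow> ('k,'q,'s,'a) pir
     \<Rightarrow> bool list list \<Rightarrow> 'k \<Rightarrow> nat \<Rightarrow> 'a option" where
  "answers Ns store S W k = (\<lambda>n. if n \<in> Ns then Some (ans S n (store n W) (qry S n k)) else None)"

definition pir_joint ::
  "nat \<Rightarrow> nat \<Rightarrow> (nat \<Rightarrow> bool list list \<Rightarrow> 's) \<Rightarrow> ('k,'q,'s,'a) pir \<Rightarrow> nat \<Rightarrow> nat
     \<Rightarrow> (bool list list \<times> 'q \<times> 'a) pmf" where
  "pir_joint K L store S \<theta> n =
     map_pmf (\<lambda>(W, k). (W, qry S n k, ans S n (store n W) (qry S n k)))
       (pair_pmf (msg_pmf K L) (key S \<theta>))"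

definition is_pir_scheme ::
  "nat \<Rightarrow> nat \<Rightarrow> nat set \<Rightarrow> (nat \<Rightarrow> bool list list \<Rightarrow> 's) \<Rightarrow> ('k,'q,'s,'a) pir \<Rightarrow> bool" where
  "is_pir_scheme K L Ns store S \<longleftrightarrow>
     (\<forall>\<theta><K. \<forall>W\<in>msgs K L. \<forall>k\<in>set_pmf (key S \<theta>).
        dec S \<theta> k (answers Ns store S W k) = W ! \<theta>) \<and>
     (\<forall>n\<in>Ns. \<forall>\<theta><K. \<forall>\<theta>'<K. pir_joint K L store S \<theta> n = pir_joint K L store S \<theta>' n)"

(* expected total number of downloaded bits; sz gives the number of bits of an answer *)
definition download ::
  "nat \<Rightarrow> nat \<Rightarrow> nat set \<Rightarrow> (nat \<Rightarrow> bool list list \<Rightarrow> 's) \<Rightarrow> ('a \<Rightarrow> nat)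
     \<Rightarrow> ('k,'q,'s,'a) pir \<Rightarrow> nat \<Rightarrow> real" where
  "download K L Ns store sz S \<theta> =
     measure_pmf.expectation (pair_pmf (msg_pmf K L) (key S \<theta>))
       (\<lambda>(W, k). real (\<Sum>n\<in>Ns. sz (ans S n (store n W) (qry S n k))))"

definition has_rate ::
  "nat \<Rightarrow> nat \<Rightarrow> nat set \<Rightarrow> (nat \<Rightarrow> bool list list \<Rightarrow> 's) \<Rightarrow> ('a \<Rightarrow> nat)
     \<Rightarrow> ('k,'q,'s,'a) pir \<Rightarrow> real \<Rightarrow> bool" where
  "has_rate K L Ns store sz S R \<longleftrightarrow>
     (\<forall>\<theta><K. download K L Ns store sz S \<theta> > 0 \<and> real L / download K L Ns store sz S \<theta> = R)"

definition full_store :: "nat \<Rightarrow> bool list list \<Rightarrow> bool list list" where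
  "full_store n W = W"

definition is_fs_pir :: "nat \<Rightarrow> nat \<Rightarrow> nat set \<Rightarrow> ('k,'q,bool list list,bool list) pir \<Rightarrow> bool" where
  "is_fs_pir K L Ns S \<longleftrightarrow> is_pir_scheme K L Ns full_store S"

definition fs_has_rate ::
  "nat \<Rightarrow> nat \<Rightarrow> nat set \<Rightarrow> ('k,'q,bool list list,bool list) pir \<Rightarrow> real \<Rightarrow> bool" where
  "fs_has_rate K L Ns S R \<longleftrightarrow> has_rate K L Ns full_store length S R"

definition blk :: "(nat \<Rightarrow> rat) \<Rightarrow> nat \<Rightarrow> nat \<Rightarrow> nat" where
  "blk \<alpha> L f = nat \<lfloor>\<alpha> f * of_nat L\<rfloor>"

definition sub :: "(nat \<Rightarrow> nat) \<Rightarrow> bool list list \<Rightarrow> nat \<Rightarrow> nat \<Rightarrow> bool list" where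
  "sub bl W k f = take (bl f) (drop (\<Sum>g<f. bl g) (W ! k))"

definition comp_store ::
  "nat \<Rightarrow> nat \<Rightarrow> (nat \<Rightarrow> nat) \<Rightarrow> (nat \<Rightarrow> nat set) \<Rightarrow> nat \<Rightarrow> bool list list
     \<Rightarrow> nat \<Rightarrow> bool list list option" where
  "comp_store K F bl NS n W =
     (\<lambda>f. if f < F \<and> n \<in> NS f then Some (map (\<lambda>k. sub bl W k f) [0..<K]) else None)"

(* the resulting scheme: independent runs of the F full-storage schemes, the f-th one on the
   databases in N_f; the answer of DB n is the tuple of its sub-scheme answers *)
definition comp_scheme ::
  "nat \<Rightarrow> (nat \<Rightarrow> nat set) \<Rightarrow> (nat \<Rightarrow> ('k,'q,bool list list,bool list) pir)
     \<Rightarrow> (nat \<Rightarrow> 'k, nat \<Rightarrow> 'q option, nat \<Rightarrow> bool list list option, nat \<Rightarrow> bool list) pir" where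
  "comp_scheme F NS S =
     \<lparr> key = (\<lambda>\<theta>. Pi_pmf {..<F} undefined (\<lambda>f. key (S f) \<theta>)),
       qry = (\<lambda>n k f. if f < F \<and> n \<in> NS f then Some (qry (S f) n (k f)) else None),
       ans = (\<lambda>n c q f. case (c f, q f) of (Some m, Some qq) \<Rightarrow> ans (S f) n m qq | _ \<Rightarrow> []),
       dec = (\<lambda>\<theta> k A. concat (map (\<lambda>f. dec (S f) \<theta> (k f)
                 (\<lambda>n. if n \<in> NS f then map_option (\<lambda>a. a f) (A n) else None)) [0..<F])) \<rparr>"

definition comp_sz :: "nat \<Rightarrow> (nat \<Rightarrow> bool list) \<Rightarrow> nat" where
  "comp_sz F a = (\<Sum>f<F. length (a f))"

end

theory Submission
  imports Defs
begin

(* Decodability: the f-th run returns the f-th block of W_theta, and the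
   consecutive blocks concatenate to W_theta.  Privacy: the query to a database is the tuple of its
   sub-scheme queries, drawn from a product of distributions none of which depends on theta, and its
   answer is a deterministic function of the messages and that query.  Rate: every window of a
   uniform message tuple is again uniform, so the expected download is the sum of the sub-scheme
   downloads D_f = alpha_f L / R_f, and L / (D_1 + ... + D_F) = (alpha_1/R_1 + ... + alpha_F/R_F)^-1. *)

lemma pmf_of_set_Times:
  assumes "finite A" "A \<noteq> {}" "finite B" "B \<noteq> {}"
  shows "pmf_of_set (A \<times> B) = pair_pmf (pmf_of_set A) (pmf_of_set B)"
  by (rule pmf_eqI) (auto simp: assms pmf_pair card_cartesian_product indicator_def)

lemma finite_msgs: "finite (msgs K L)"
proof -
  have "finite {w :: bool list. length w = L}"
    using finite_lists_length_eq[of "UNIV :: bool set" L] by simp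
  then have "finite {Ws. set Ws \<subseteq> {w :: bool list. length w = L} \<and> length Ws = K}"
    by (rule finite_lists_length_eq)
  moreover have "msgs K L = {Ws. set Ws \<subseteq> {w. length w = L} \<and> length Ws = K}"
    by (auto simp: msgs_def)
  ultimately show ?thesis by simp
qed

lemma msgs_nonempty: "msgs K L \<noteq> {}"
  by (auto simp: msgs_def intro!: exI[of _ "replicate K (replicate L False)"])

lemma take_window_drop_decomp: "take a w @ take b (drop a w) @ drop (a + b) w = w"
  by (metis append.assoc append_take_drop_id drop_drop add.commute take_add)

lemma bij_betw_window_split:
  assumes "a + b \<le> L"
  shows "bij_betw (\<lambda>W. (map (\<lambda>w. take b (drop a w)) W, map (take a) W, map (drop (a + b)) W))
           (msgs K L) (msgs K b \<times> msgs K a \<times> msgs K (L - a - b))"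
    (is "bij_betw ?split _ _")
proof (rule bij_betw_imageI)
  show "inj_on ?split (msgs K L)"
  proof (rule inj_onI)
    fix V W assume "V \<in> msgs K L" "W \<in> msgs K L" "?split V = ?split W"
    then have len: "length V = length W"
      and window: "map (\<lambda>w. take b (drop a w)) V = map (\<lambda>w. take b (drop a w)) W"
      and prefix: "map (take a) V = map (take a) W"
      and suffix: "map (drop (a + b)) V = map (drop (a + b)) W"
      by (simp_all add: msgs_def)
    show "V = W"
    proof (rule nth_equalityI[OF len])
      fix i assume i: "i < length V"
      have "V ! i = take a (V ! i) @ take b (drop a (V ! i)) @ drop (a + b) (V ! i)"
        by (rule take_window_drop_decomp[symmetric])
      also have "\<dots> = take a (W ! i) @ take b (drop a (W ! i)) @ drop (a + b) (W ! i)"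
        using arg_cong[OF window, of "\<lambda>xs. xs ! i"] arg_cong[OF prefix, of "\<lambda>xs. xs ! i"]
          arg_cong[OF suffix, of "\<lambda>xs. xs ! i"] i len by simp
      also have "\<dots> = W ! i"
        by (rule take_window_drop_decomp)
      finally show "V ! i = W ! i" .
    qed
  qed
  show "?split ` msgs K L = msgs K b \<times> msgs K a \<times> msgs K (L - a - b)"
  proof (intro equalityI subsetI)
    fix x assume "x \<in> ?split ` msgs K L"
    then show "x \<in> msgs K b \<times> msgs K a \<times> msgs K (L - a - b)"
      using assms by (auto simp: msgs_def)
  next
    fix x assume "x \<in> msgs K b \<times> msgs K a \<times> msgs K (L - a - b)"
    then obtain ms ps ss where x: "x = (ms, ps, ss)"
      and ms: "ms \<in> msgs K b" and ps: "ps \<in> msgs K a" and ss: "ss \<in> msgs K (L - a - b)"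
      by auto
    have len: "length ms = K" "length ps = K" "length ss = K"
      and len_nth: "\<And>i. i < K \<Longrightarrow> length (ms ! i) = b \<and> length (ps ! i) = a \<and> length (ss ! i) = L - a - b"
      using ms ps ss by (auto simp: msgs_def)
    define W where "W = map (\<lambda>i. ps ! i @ ms ! i @ ss ! i) [0..<K]"
    have "W \<in> msgs K L" using len_nth assms by (auto simp: W_def msgs_def)
    moreover have "?split W = x"
      by (simp add: x W_def len len_nth list_eq_iff_nth_eq)
    ultimately show "x \<in> ?split ` msgs K L"
      by blast
  qed
qed

lemma map_pmf_window_msg_pmf:
  assumes "a + b \<le> L"
  shows "map_pmf (map (\<lambda>w. take b (drop a w))) (msg_pmf K L) = msg_pmf K b"
proof -
  let ?split = "\<lambda>W. (map (\<lambda>w. take b (drop a w)) W, map (take a) W, map (drop (a + b)) W)"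
  have bij: "bij_betw ?split (msgs K L) (msgs K b \<times> msgs K a \<times> msgs K (L - a - b))"
    using assms by (rule bij_betw_window_split)
  have "map_pmf ?split (msg_pmf K L) = pmf_of_set (msgs K b \<times> msgs K a \<times> msgs K (L - a - b))"
    using bij unfolding msg_pmf_def bij_betw_def
    by (simp add: map_pmf_of_set_inj finite_msgs msgs_nonempty)
  also have "\<dots> = pair_pmf (msg_pmf K b) (pmf_of_set (msgs K a \<times> msgs K (L - a - b)))"
    by (simp add: pmf_of_set_Times finite_msgs msgs_nonempty msg_pmf_def)
  finally have "map_pmf fst (map_pmf ?split (msg_pmf K L)) = msg_pmf K b"
    by (simp add: map_fst_pair_pmf)
  then show ?thesis by (simp add: pmf.map_comp o_def)
qed

lemma concat_take_drop_blocks: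
  "concat (map (\<lambda>f. take (bl f) (drop (\<Sum>g<f. bl g) w)) [0..<F]) = take (\<Sum>g<F. bl g) w"
  by (induction F) (simp_all add: take_add)

lemma Pi_pmf_map_dependent:
  assumes "finite A"
  shows "Pi_pmf A d (\<lambda>x. map_pmf (g x) (p x)) = map_pmf (\<lambda>h x. if x \<in> A then g x (h x) else d) (Pi_pmf A d' p)"
  using assms by (simp add: map_pmf_def Pi_pmf_bind[where d'=d'])

lemma sum_lessThan_add_le_sum:
  fixes g :: "nat \<Rightarrow> nat"
  assumes "f < F"
  shows "(\<Sum>i<f. g i) + g f \<le> (\<Sum>i<F. g i)"
proof -
  have "(\<Sum>i<f. g i) + g f = (\<Sum>i<Suc f. g i)" by simp
  also have "\<dots> \<le> (\<Sum>i<F. g i)" by (rule sum_mono2) (use assms in auto)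
  finally show ?thesis .
qed

lemma pir_joint_conv_query_dist:
  "pir_joint K L store S \<theta> n =
     map_pmf (\<lambda>(W, q). (W, q, ans S n (store n W) q))
       (pair_pmf (msg_pmf K L) (map_pmf (qry S n) (key S \<theta>)))"
  unfolding pir_joint_def pair_map_pmf2 pmf.map_comp by (rule map_pmf_cong) auto

lemma query_dist_conv_pir_joint:
  "map_pmf (qry S n) (key S \<theta>) = map_pmf (\<lambda>(W, q, a). q) (pir_joint K L store S \<theta> n)"
proof -
  have "map_pmf (\<lambda>(W, q, a). q) (pir_joint K L store S \<theta> n) =
      map_pmf snd (pair_pmf (msg_pmf K L) (map_pmf (qry S n) (key S \<theta>)))"
    unfolding pir_joint_conv_query_dist pmf.map_comp by (rule map_pmf_cong) auto
  then show ?thesis by (simp add: map_snd_pair_pmf)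
qed

lemma pir_joint_eq_iff_query_dist_eq:
  "pir_joint K L store S \<theta> n = pir_joint K L store S \<theta>' n \<longleftrightarrow>
     map_pmf (qry S n) (key S \<theta>) = map_pmf (qry S n) (key S \<theta>')"
proof
  assume "pir_joint K L store S \<theta> n = pir_joint K L store S \<theta>' n"
  then show "map_pmf (qry S n) (key S \<theta>) = map_pmf (qry S n) (key S \<theta>')"
    by (simp only: query_dist_conv_pir_joint[where K = K and L = L and store = store])
next
  assume "map_pmf (qry S n) (key S \<theta>) = map_pmf (qry S n) (key S \<theta>')"
  then show "pir_joint K L store S \<theta> n = pir_joint K L store S \<theta>' n"
    by (simp only: pir_joint_conv_query_dist)
qed

lemma of_nat_blk:
  assumes "\<exists>m::nat. \<alpha> f * of_nat L = of_nat m"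
  shows "of_nat (blk \<alpha> L f) = \<alpha> f * of_nat L"
proof -
  obtain m :: nat where m: "\<alpha> f * of_nat L = of_nat m"
    using assms ..
  have "blk \<alpha> L f = m"
    unfolding blk_def m by simp
  then show ?thesis
    using m by simp
qed

lemma sum_blk:
  assumes "(\<Sum>f<F. \<alpha> f) = 1" and "\<forall>f<F. \<exists>m::nat. \<alpha> f * of_nat L = of_nat m"
  shows "(\<Sum>f<F. blk \<alpha> L f) = L"
proof -
  have "(of_nat (\<Sum>f<F. blk \<alpha> L f) :: rat) = (\<Sum>f<F. \<alpha> f * of_nat L)"
    using assms(2) by (simp add: of_nat_blk)
  also have "\<dots> = of_nat L"
    using assms(1) by (simp add: sum_distrib_right[symmetric])
  finally show ?thesis by (simp only: of_nat_eq_iff)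
qed

definition block_msgs :: "nat \<Rightarrow> (nat \<Rightarrow> nat) \<Rightarrow> nat \<Rightarrow> bool list list \<Rightarrow> bool list list" where
  "block_msgs K bl f W = map (\<lambda>k. sub bl W k f) [0..<K]"

lemma block_msgs_eq_map_window:
  assumes "W \<in> msgs K L"
  shows "block_msgs K bl f W = map (\<lambda>w. take (bl f) (drop (\<Sum>g<f. bl g) w)) W"
  using assms by (intro nth_equalityI) (auto simp: block_msgs_def sub_def msgs_def)

lemma block_msgs_in_msgs:
  assumes "W \<in> msgs K L" and "(\<Sum>g<f. bl g) + bl f \<le> L"
  shows "block_msgs K bl f W \<in> msgs K (bl f)"
  using assms unfolding block_msgs_eq_map_window[OF assms(1)] by (auto simp: msgs_def)

lemma map_pmf_block_msgs:
  assumes "(\<Sum>g<f. bl g) + bl f \<le> L"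
  shows "map_pmf (block_msgs K bl f) (msg_pmf K L) = msg_pmf K (bl f)"
proof -
  have "map_pmf (block_msgs K bl f) (msg_pmf K L) =
      map_pmf (map (\<lambda>w. take (bl f) (drop (\<Sum>g<f. bl g) w))) (msg_pmf K L)"
    by (rule map_pmf_cong) (auto simp: msg_pmf_def finite_msgs msgs_nonempty block_msgs_eq_map_window)
  also have "\<dots> = msg_pmf K (bl f)"
    using assms by (rule map_pmf_window_msg_pmf)
  finally show ?thesis .
qed

lemma key_comp_scheme [simp]:
  "key (comp_scheme F NS S) \<theta> = Pi_pmf {..<F} undefined (\<lambda>f. key (S f) \<theta>)"
  by (simp add: comp_scheme_def)

lemma dec_comp_scheme:
  "dec (comp_scheme F NS S) \<theta> k A =
     concat (map (\<lambda>f. dec (S f) \<theta> (k f) (\<lambda>n. if n \<in> NS f then map_option (\<lambda>a. a f) (A n) else None))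
       [0..<F])"
  by (simp add: comp_scheme_def)

lemma ans_comp_scheme_block:
  assumes "f < F"
  shows "ans (comp_scheme F NS S) n (comp_store K F bl NS n W) (qry (comp_scheme F NS S) n k) f =
    (if n \<in> NS f then ans (S f) n (block_msgs K bl f W) (qry (S f) n (k f)) else [])"
  using assms by (simp add: comp_scheme_def comp_store_def block_msgs_def)

lemma answers_comp_scheme_block:
  assumes "f < F" and "NS f \<subseteq> Ns"
  shows "(\<lambda>n. if n \<in> NS f then map_option (\<lambda>a. a f)
                 (answers Ns (comp_store K F bl NS) (comp_scheme F NS S) W k n) else None) =
    answers (NS f) full_store (S f) (block_msgs K bl f W) (k f)"
  using assms by (auto simp: answers_def full_store_def ans_comp_scheme_block fun_eq_iff)

lemma comp_scheme_decodes:
  assumes "(\<Sum>f<F. bl f) = L" and "\<forall>f<F. NS f \<subseteq> Ns"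
    and "\<forall>f<F. is_fs_pir K (bl f) (NS f) (S f)"
    and "\<theta> < K" and "W \<in> msgs K L" and "k \<in> set_pmf (key (comp_scheme F NS S) \<theta>)"
  shows "dec (comp_scheme F NS S) \<theta> k (answers Ns (comp_store K F bl NS) (comp_scheme F NS S) W k) = W ! \<theta>"
proof -
  have block: "dec (S f) \<theta> (k f) (answers (NS f) full_store (S f) (block_msgs K bl f W) (k f)) =
      take (bl f) (drop (\<Sum>g<f. bl g) (W ! \<theta>))" if "f < F" for f
  proof -
    have "block_msgs K bl f W \<in> msgs K (bl f)"
      using assms(1,5) sum_lessThan_add_le_sum[OF \<open>f < F\<close>] by (intro block_msgs_in_msgs) auto
    moreover have "k f \<in> set_pmf (key (S f) \<theta>)"
      using assms(6) \<open>f < F\<close> by (auto simp: set_Pi_pmf PiE_dflt_def)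
    ultimately have "dec (S f) \<theta> (k f) (answers (NS f) full_store (S f) (block_msgs K bl f W) (k f)) =
        block_msgs K bl f W ! \<theta>"
      using assms(3,4) \<open>f < F\<close> by (auto simp: is_fs_pir_def is_pir_scheme_def)
    then show ?thesis using assms(4) by (simp add: block_msgs_def sub_def)
  qed
  have "dec (comp_scheme F NS S) \<theta> k (answers Ns (comp_store K F bl NS) (comp_scheme F NS S) W k) =
      concat (map (\<lambda>f. dec (S f) \<theta> (k f) (\<lambda>n. if n \<in> NS f then map_option (\<lambda>a. a f)
        (answers Ns (comp_store K F bl NS) (comp_scheme F NS S) W k n) else None)) [0..<F])"
    by (rule dec_comp_scheme)
  also have "\<dots> = concat (map (\<lambda>f. take (bl f) (drop (\<Sum>g<f. bl g) (W ! \<theta>))) [0..<F])"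
    using assms(2) by (intro arg_cong[where f = concat] map_cong refl) (simp add: answers_comp_scheme_block block)
  also have "\<dots> = W ! \<theta>"
    using assms(1,4,5) by (simp add: concat_take_drop_blocks msgs_def)
  finally show ?thesis .
qed

lemma query_dist_comp_scheme:
  "map_pmf (qry (comp_scheme F NS S) n) (key (comp_scheme F NS S) \<theta>) =
     Pi_pmf {..<F} None (\<lambda>f. map_pmf (\<lambda>x. if n \<in> NS f then Some (qry (S f) n x) else None) (key (S f) \<theta>))"
proof -
  have "Pi_pmf {..<F} None (\<lambda>f. map_pmf (\<lambda>x. if n \<in> NS f then Some (qry (S f) n x) else None) (key (S f) \<theta>)) =
      map_pmf (\<lambda>h f. if f \<in> {..<F} then if n \<in> NS f then Some (qry (S f) n (h f)) else None else None)
        (key (comp_scheme F NS S) \<theta>)"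
    by (simp add: Pi_pmf_map_dependent[where d' = undefined])
  also have "(\<lambda>h f. if f \<in> {..<F} then if n \<in> NS f then Some (qry (S f) n (h f)) else None else None) =
      qry (comp_scheme F NS S) n"
    by (auto simp: comp_scheme_def fun_eq_iff)
  finally show ?thesis by (rule sym)
qed

lemma comp_scheme_private:
  assumes "\<forall>f<F. is_fs_pir K (bl f) (NS f) (S f)" and "\<theta> < K" and "\<theta>' < K"
  shows "pir_joint K L (comp_store K F bl NS) (comp_scheme F NS S) \<theta> n =
         pir_joint K L (comp_store K F bl NS) (comp_scheme F NS S) \<theta>' n"
proof -
  have "map_pmf (\<lambda>x. if n \<in> NS f then Some (qry (S f) n x) else None) (key (S f) \<theta>) =
        map_pmf (\<lambda>x. if n \<in> NS f then Some (qry (S f) n x) else None) (key (S f) \<theta>')" if "f < F" for f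
  proof (cases "n \<in> NS f")
    case True
    have "is_pir_scheme K (bl f) (NS f) full_store (S f)"
      using assms(1) \<open>f < F\<close> by (simp add: is_fs_pir_def)
    then have "pir_joint K (bl f) full_store (S f) \<theta> n = pir_joint K (bl f) full_store (S f) \<theta>' n"
      using True assms(2,3) unfolding is_pir_scheme_def by blast
    then have "map_pmf Some (map_pmf (qry (S f) n) (key (S f) \<theta>)) =
        map_pmf Some (map_pmf (qry (S f) n) (key (S f) \<theta>'))"
      by (simp add: pir_joint_eq_iff_query_dist_eq)
    with True show ?thesis by (simp add: pmf.map_comp o_def)
  qed simp
  then have "map_pmf (qry (comp_scheme F NS S) n) (key (comp_scheme F NS S) \<theta>) =
      map_pmf (qry (comp_scheme F NS S) n) (key (comp_scheme F NS S) \<theta>')"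
    unfolding query_dist_comp_scheme by (intro Pi_pmf_cong) auto
  then show ?thesis by (simp add: pir_joint_eq_iff_query_dist_eq)
qed

lemma is_pir_scheme_comp_scheme:
  assumes "(\<Sum>f<F. bl f) = L" and "\<forall>f<F. NS f \<subseteq> Ns" and "\<forall>f<F. is_fs_pir K (bl f) (NS f) (S f)"
  shows "is_pir_scheme K L Ns (comp_store K F bl NS) (comp_scheme F NS S)"
  unfolding is_pir_scheme_def
  using comp_scheme_decodes[OF assms] comp_scheme_private[OF assms(3)] by blast

lemma sum_comp_sz_answers:
  assumes "finite Ns" and "\<forall>f<F. NS f \<subseteq> Ns"
  shows "(\<Sum>n\<in>Ns. comp_sz F (ans (comp_scheme F NS S) n (comp_store K F bl NS n W) (qry (comp_scheme F NS S) n k))) =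
    (\<Sum>f<F. \<Sum>n\<in>NS f. length (ans (S f) n (block_msgs K bl f W) (qry (S f) n (k f))))"
proof -
  have "(\<Sum>n\<in>Ns. comp_sz F (ans (comp_scheme F NS S) n (comp_store K F bl NS n W) (qry (comp_scheme F NS S) n k))) =
      (\<Sum>f<F. \<Sum>n\<in>Ns. if n \<in> NS f then length (ans (S f) n (block_msgs K bl f W) (qry (S f) n (k f))) else 0)"
    unfolding comp_sz_def
    by (subst sum.swap) (intro sum.cong[OF refl], simp add: ans_comp_scheme_block)
  also have "\<dots> = (\<Sum>f<F. \<Sum>n\<in>NS f. length (ans (S f) n (block_msgs K bl f W) (qry (S f) n (k f))))"
  proof (rule sum.cong[OF refl])
    fix f assume "f \<in> {..<F}"
    then have "Ns \<inter> NS f = NS f" using assms(2) by auto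
    then show "(\<Sum>n\<in>Ns. if n \<in> NS f then length (ans (S f) n (block_msgs K bl f W) (qry (S f) n (k f))) else 0) =
        (\<Sum>n\<in>NS f. length (ans (S f) n (block_msgs K bl f W) (qry (S f) n (k f))))"
      by (simp add: sum.If_cases[OF assms(1)])
  qed
  finally show ?thesis .
qed

(* The non-vanishing hypothesis makes the sub-downloads genuine integrals: a Bochner integral of a
   non-integrable function is 0. *)
lemma download_comp_scheme:
  fixes S :: "nat \<Rightarrow> ('k, 'q, bool list list, bool list) pir"
  assumes "(\<Sum>f<F. bl f) \<le> L" and "finite Ns" and "\<forall>f<F. NS f \<subseteq> Ns"
    and "\<forall>f<F. download K (bl f) (NS f) full_store length (S f) \<theta> \<noteq> 0"
  shows "download K L Ns (comp_store K F bl NS) (comp_sz F) (comp_scheme F NS S) \<theta> =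
    (\<Sum>f<F. download K (bl f) (NS f) full_store length (S f) \<theta>)"
proof -
  define P where "P = pair_pmf (msg_pmf K L) (key (comp_scheme F NS S) \<theta>)"
  define cost where "cost f = (\<lambda>(V, x). real (\<Sum>n\<in>NS f. length (ans (S f) n (full_store n V) (qry (S f) n x))))"
    for f
  define proj where "proj f = (\<lambda>(W, k :: nat \<Rightarrow> 'k). (block_msgs K bl f W, k f))" for f
  have marginal: "map_pmf (proj f) P = pair_pmf (msg_pmf K (bl f)) (key (S f) \<theta>)" if "f < F" for f
  proof -
    have "map_pmf (proj f) P = pair_pmf (map_pmf (block_msgs K bl f) (msg_pmf K L))
        (map_pmf (\<lambda>k. k f) (key (comp_scheme F NS S) \<theta>))"
      by (simp add: P_def proj_def map_pair[symmetric] case_prod_beta)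
    also have "\<dots> = pair_pmf (msg_pmf K (bl f)) (key (S f) \<theta>)"
      using assms(1) sum_lessThan_add_le_sum[OF that, of bl] that
      by (simp add: map_pmf_block_msgs Pi_pmf_component)
    finally show ?thesis .
  qed
  have download_block: "download K (bl f) (NS f) full_store length (S f) \<theta> =
      measure_pmf.expectation P (\<lambda>x. cost f (proj f x))" if "f < F" for f
    by (simp add: download_def cost_def marginal[OF that, symmetric])
  have integrable: "integrable P (\<lambda>x. cost f (proj f x))" if "f < F" for f
    using assms(4) that download_block[OF that] not_integrable_integral_eq by fastforce
  have "download K L Ns (comp_store K F bl NS) (comp_sz F) (comp_scheme F NS S) \<theta> =
      measure_pmf.expectation P (\<lambda>x. \<Sum>f<F. cost f (proj f x))"
    unfolding download_def P_def
    by (intro Bochner_Integration.integral_cong refl)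
       (auto simp: sum_comp_sz_answers[OF assms(2,3)] cost_def proj_def full_store_def)
  also have "\<dots> = (\<Sum>f<F. measure_pmf.expectation P (\<lambda>x. cost f (proj f x)))"
    using integrable by (intro Bochner_Integration.integral_sum) auto
  also have "\<dots> = (\<Sum>f<F. download K (bl f) (NS f) full_store length (S f) \<theta>)"
    by (intro sum.cong refl) (simp add: download_block)
  finally show ?thesis .
qed

lemma combined_rate:
  fixes a D :: "nat \<Rightarrow> real" and L :: real
  assumes "\<forall>f<F. a f > 0"
  shows "L / (\<Sum>f<F. D f) = 1 / (\<Sum>f<F. a f / (a f * L / D f))"
proof -
  have "a f / (a f * L / D f) = D f / L" if "f < F" for f
  proof -
    from assms that have "a f \<noteq> 0" by auto
    have "a f / (a f * L / D f) = a f * D f / (a f * L)"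
      by (simp add: divide_divide_eq_right)
    also have "\<dots> = D f / L"
      using \<open>a f \<noteq> 0\<close> by simp
    finally show ?thesis .
  qed
  then have "(\<Sum>f<F. a f / (a f * L / D f)) = (\<Sum>f<F. D f) / L"
    by (simp add: sum_divide_distrib)
  then show ?thesis by simp
qed

lemma has_rate_comp_scheme:
  assumes "F > 0" and "(\<Sum>f<F. bl f) \<le> L" and "finite Ns" and "\<forall>f<F. NS f \<subseteq> Ns"
    and "\<forall>f<F. a f > 0 \<and> real (bl f) = a f * real L"
    and "\<forall>f<F. fs_has_rate K (bl f) (NS f) (S f) (R f)"
  shows "has_rate K L Ns (comp_store K F bl NS) (comp_sz F) (comp_scheme F NS S) (1 / (\<Sum>f<F. a f / R f))"
  unfolding has_rate_def
proof (intro allI impI conjI)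
  fix \<theta> assume "\<theta> < K"
  let ?D = "\<lambda>f. download K (bl f) (NS f) full_store length (S f) \<theta>"
  have D_pos: "?D f > 0" and R_eq: "R f = a f * real L / ?D f" if "f < F" for f
    using assms(5,6) that \<open>\<theta> < K\<close> by (auto simp: fs_has_rate_def has_rate_def)
  have download: "download K L Ns (comp_store K F bl NS) (comp_sz F) (comp_scheme F NS S) \<theta> = (\<Sum>f<F. ?D f)"
    using assms(2-4) D_pos by (intro download_comp_scheme) fastforce+
  show "download K L Ns (comp_store K F bl NS) (comp_sz F) (comp_scheme F NS S) \<theta> > 0"
    unfolding download using assms(1) D_pos by (intro sum_pos) auto
  have "real L / (\<Sum>f<F. ?D f) = 1 / (\<Sum>f<F. a f / (a f * real L / ?D f))"
    using assms(5) by (intro combined_rate) simp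
  also have "\<dots> = 1 / (\<Sum>f<F. a f / R f)"
    using R_eq by simp
  finally show "real L / download K L Ns (comp_store K F bl NS) (comp_sz F) (comp_scheme F NS S) \<theta> =
      1 / (\<Sum>f<F. a f / R f)"
    unfolding download .
qed

theorem theorem1:
  fixes N K F L :: nat
    and \<alpha> :: "nat \<Rightarrow> rat"
    and NS :: "nat \<Rightarrow> nat set"
    and S :: "nat \<Rightarrow> ('k, 'q, bool list list, bool list) pir"
    and R :: "nat \<Rightarrow> real"
  assumes "N > 0" and "K > 0" and "F > 0"
    and "\<forall>f<F. \<alpha> f > 0"
    and "(\<Sum>f<F. \<alpha> f) = 1"
    and "\<forall>f<F. \<exists>m::nat. m > 0 \<and> \<alpha> f * of_nat L = of_nat m"
    and "\<forall>f<F. NS f \<noteq> {} \<and> NS f \<subseteq> {..<N}"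
    and "\<forall>f<F. is_fs_pir K (blk \<alpha> L f) (NS f) (S f)"
    and "\<forall>f<F. fs_has_rate K (blk \<alpha> L f) (NS f) (S f) (R f)"
  shows "is_pir_scheme K L {..<N} (comp_store K F (blk \<alpha> L) NS) (comp_scheme F NS S)
       \<and> has_rate K L {..<N} (comp_store K F (blk \<alpha> L) NS) (comp_sz F) (comp_scheme F NS S)
           (1 / (\<Sum>f<F. real_of_rat (\<alpha> f) / R f))"
proof -
  have integral_sizes: "\<forall>f<F. \<exists>m::nat. \<alpha> f * of_nat L = of_nat m"
    using assms(6) by blast
  have sizes_sum: "(\<Sum>f<F. blk \<alpha> L f) = L"
    using assms(5) integral_sizes by (rule sum_blk)
  have real_sizes: "real_of_rat (\<alpha> f) > 0 \<and> real (blk \<alpha> L f) = real_of_rat (\<alpha> f) * real L"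
    if "f < F" for f
  proof -
    have "real (blk \<alpha> L f) = real_of_rat (of_nat (blk \<alpha> L f))" by simp
    also have "\<dots> = real_of_rat (\<alpha> f) * real L"
      using of_nat_blk[of \<alpha> f L] integral_sizes that by (simp add: of_rat_mult)
    finally show ?thesis using assms(4) that by simp
  qed
  have NS_sub: "\<forall>f<F. NS f \<subseteq> {..<N}"
    using assms(7) by blast
  show ?thesis
    using sizes_sum NS_sub real_sizes assms(3,8,9)
    by (intro conjI is_pir_scheme_comp_scheme has_rate_comp_scheme) auto
qed

end
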